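(* Let $\mathbf C$ and $\mathbf D$ be categories given by presentations (generators and relations) which are cliques. Let $O_{\mathbf C}$ be a nonempty set of objects of $\mathbf C$ and $G_{\mathbf C}$ a set of generators of $\mathbf C$ between objects of $O_{\mathbf C}$, and similarly $O_{\mathbf D}$, $G_{\mathbf D}$ for $\mathbf D$. Let $\alpha:O_{\mathbf C}\to O_{\mathbf D}$ and $\beta:G_{\mathbf C}\to G_{\mathbf D}$ be compatible bijections (if $g:a\to b$ then $\beta(g):\alpha(a)\to\alpha(b)$). Suppose the subcategory of $\mathbf D$ with objects $O_{\mathbf D}$ generated by $G_{\mathbf D}$ is a full subcategory of $\mathbf D$. Then the category $G(\alpha,\beta)$ is a clique.
   Context: A clique (abstract clique) is a category with a nonempty set of objects and exactly one morphism between each ordered pair of objects (equivalently a nonempty connected thin groupoid). $G(\alpha,\beta)$ is the category presented as follows: its objects are the pushout of the object sets of $\mathbf C$ and $\mathbf D$ along the bijection $\alpha$ (objects of $O_{\mathbf C}$ identified with their images); its generators are the pushout of the generators of $\mathbf C$ and of $\mathbf D$ along $\beta$; its relations are all relations of $\mathbf C$ and all relations of $\mathbf D$. *)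

theory Defs
  imports Main
begin

text \<open>A presentation of a category: objects, generators with source and target,
  and relations, each relation being a pair of parallel paths p, q from a to b,
  recorded as (a, b, p, q).  A path is a list of composable generators together
  with its endpoints (the empty path at a is the identity of a).\<close>

record ('o, 'g) pres =
  obj :: "'o set"
  gen :: "'g set"
  src :: "'g \<Rightarrow> 'o"
  tgt :: "'g \<Rightarrow> 'o"
  rel :: "('o \<times> 'o \<times> 'g list \<times> 'g list) set"

fun is_path :: "('o, 'g, 'z) pres_scheme \<Rightarrow> 'o \<Rightarrow> 'g list \<Rightarrow> 'o \<Rightarrow> bool" where
  "is_path P a [] b = (a = b \<and> a \<in> obj P)"
| "is_path P a (g # gs) b =
     (a \<in> obj P \<and> g \<in> gen P \<and> src P g = a \<and> is_path P (tgt P g) gs b)"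

definition wf_pres :: "('o, 'g, 'z) pres_scheme \<Rightarrow> bool" where
  "wf_pres P \<longleftrightarrow>
     (\<forall>g\<in>gen P. src P g \<in> obj P \<and> tgt P g \<in> obj P) \<and>
     (\<forall>(a, b, p, q)\<in>rel P. is_path P a p b \<and> is_path P a q b)"

text \<open>Equality of morphisms in the presented category: the congruence on paths
  a \<rightarrow> b generated by the relations.\<close>

inductive peq :: "('o, 'g, 'z) pres_scheme \<Rightarrow> 'o \<Rightarrow> 'o \<Rightarrow> 'g list \<Rightarrow> 'g list \<Rightarrow> bool"
  for P where
  peq_rel: "(c, d, p, q) \<in> rel P \<Longrightarrow> is_path P a u c \<Longrightarrow> is_path P d v b \<Longrightarrow>
            peq P a b (u @ p @ v) (u @ q @ v)"
| peq_refl: "is_path P a p b \<Longrightarrow> peq P a b p p"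
| peq_sym: "peq P a b p q \<Longrightarrow> peq P a b q p"
| peq_trans: "peq P a b p q \<Longrightarrow> peq P a b q r \<Longrightarrow> peq P a b p r"

definition clique :: "('o, 'g, 'z) pres_scheme \<Rightarrow> bool" where
  "clique P \<longleftrightarrow> obj P \<noteq> {} \<and>
     (\<forall>a\<in>obj P. \<forall>b\<in>obj P. (\<exists>p. is_path P a p b) \<and>
        (\<forall>p q. is_path P a p b \<longrightarrow> is_path P a q b \<longrightarrow> peq P a b p q))"

definition full_generated_subcat :: "('o, 'g, 'z) pres_scheme \<Rightarrow> 'o set \<Rightarrow> 'g set \<Rightarrow> bool" where
  "full_generated_subcat P Os Gs \<longleftrightarrow>
     (\<forall>a\<in>Os. \<forall>b\<in>Os. \<forall>p. is_path P a p b \<longrightarrow>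
        (\<exists>q. set q \<subseteq> Gs \<and> is_path P a q b \<and> peq P a b p q))"

text \<open>The pushout of object sets along the
  bijection alpha is realised concretely: objects of O_C are identified with their
  images, so the objects are (obj C - O_C) (tagged Inl) together with obj D
  (tagged Inr); likewise for generators along beta.\<close>

definition glue_obj :: "'a set \<Rightarrow> ('a \<Rightarrow> 'c) \<Rightarrow> 'a \<Rightarrow> 'a + 'c" where
  "glue_obj OC \<alpha> x = (if x \<in> OC then Inr (\<alpha> x) else Inl x)"

definition glue_gen :: "'b set \<Rightarrow> ('b \<Rightarrow> 'd) \<Rightarrow> 'b \<Rightarrow> 'b + 'd" where
  "glue_gen GC \<beta> g = (if g \<in> GC then Inr (\<beta> g) else Inl g)"

definition G_pres ::
  "('a, 'b) pres \<Rightarrow> ('c, 'd) pres \<Rightarrow> 'a set \<Rightarrow> 'b set \<Rightarrow> ('a \<Rightarrow> 'c) \<Rightarrow> ('b \<Rightarrow> 'd)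
   \<Rightarrow> ('a + 'c, 'b + 'd) pres" where
  "G_pres C D OC GC \<alpha> \<beta> =
    \<lparr> obj = Inl ` (obj C - OC) \<union> Inr ` obj D,
      gen = Inl ` (gen C - GC) \<union> Inr ` gen D,
      src = case_sum (\<lambda>g. glue_obj OC \<alpha> (src C g)) (\<lambda>g. Inr (src D g)),
      tgt = case_sum (\<lambda>g. glue_obj OC \<alpha> (tgt C g)) (\<lambda>g. Inr (tgt D g)),
      rel = (\<lambda>(a, b, p, q). (glue_obj OC \<alpha> a, glue_obj OC \<alpha> b,
                             map (glue_gen GC \<beta>) p, map (glue_gen GC \<beta>) q)) ` rel C
          \<union> (\<lambda>(a, b, p, q). (Inr a, Inr b, map Inr p, map Inr q)) ` rel D \<rparr>"

end

theory Submission
  imports Defs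
begin

text \<open>Fix some o in O_C and use \<alpha> o as base object of G(\<alpha>, \<beta>).  To every object x assign a
  path \<sigma> x from the base to x, taken inside C or inside D.  Because C and D are cliques,
  the image of any path of C (resp. D) from the base to x is equivalent in G(\<alpha>, \<beta>) to \<sigma> x;
  for x in O_C the two readings agree because fullness replaces the D-path by one through
  G_D, which \<beta> lifts back to a path in C.  Hence \<sigma> x @ [g] is equivalent to \<sigma> y for every
  generator g: x \<rightarrow> y, and every \<sigma> x has a left inverse.  By induction on paths, any path
  p: a \<rightarrow> b is then equivalent to t @ \<sigma> b, where t is the left inverse of \<sigma> a.\<close>

lemma is_path_obj: "is_path P a p b \<Longrightarrow> a \<in> obj P \<and> b \<in> obj P"
  by (induction p arbitrary: a) auto

lemma is_path_append: "is_path P a (p @ q) c \<longleftrightarrow> (\<exists>b. is_path P a p b \<and> is_path P b q c)"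
  by (induction p arbitrary: a) (auto dest: is_path_obj)

lemma peq_whisker:
  "peq P a b p q \<Longrightarrow> is_path P c u a \<Longrightarrow> is_path P b v d \<Longrightarrow> peq P c d (u @ p @ v) (u @ q @ v)"
proof (induction arbitrary: c u d v rule: peq.induct)
  case (peq_rel c' d' p q a u' v' b)
  have "is_path P c (u @ u') c'" "is_path P d' (v' @ v) d"
    using peq_rel by (auto simp: is_path_append)
  from peq.peq_rel[OF peq_rel(1) this] show ?case by simp
next
  case (peq_refl a p b)
  then show ?case by (intro peq.peq_refl) (meson is_path_append)
next
  case (peq_sym a b p q)
  then show ?case by (auto intro: peq.peq_sym)
next
  case (peq_trans a b p q r)
  then show ?case by (meson peq.peq_trans)
qed

lemma clique_connected: "clique P \<Longrightarrow> a \<in> obj P \<Longrightarrow> b \<in> obj P \<Longrightarrow> \<exists>p. is_path P a p b"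
  unfolding clique_def by blast

lemma clique_some_path:
  "clique P \<Longrightarrow> a \<in> obj P \<Longrightarrow> b \<in> obj P \<Longrightarrow> is_path P a (SOME p. is_path P a p b) b"
  by (rule someI_ex) (rule clique_connected)

lemma clique_peq: "clique P \<Longrightarrow> is_path P a p b \<Longrightarrow> is_path P a q b \<Longrightarrow> peq P a b p q"
  unfolding clique_def by (metis is_path_obj)

lemma clique_if_coherent_spine:
  assumes "z \<in> obj P"
    and spine_path: "\<And>x. x \<in> obj P \<Longrightarrow> is_path P z (\<sigma> x) x"
    and spine_inv: "\<And>x. x \<in> obj P \<Longrightarrow> \<exists>t. is_path P x t z \<and> peq P x x (t @ \<sigma> x) []"
    and spine_gen: "\<And>g. g \<in> gen P \<Longrightarrow> peq P z (tgt P g) (\<sigma> (src P g) @ [g]) (\<sigma> (tgt P g))"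
  shows "clique P"
proof -
  have z: "is_path P z [] z" using \<open>z \<in> obj P\<close> by simp
  have absorb: "peq P z y (\<sigma> x @ p) (\<sigma> y)" if "is_path P x p y" for x p y
    using that
  proof (induction p arbitrary: x)
    case Nil
    then show ?case using spine_path by (auto intro: peq.peq_refl)
  next
    case (Cons g p)
    then have g: "g \<in> gen P" "src P g = x" "is_path P (tgt P g) p y" by auto
    have "peq P z y ([] @ (\<sigma> x @ [g]) @ p) ([] @ \<sigma> (tgt P g) @ p)"
      using peq_whisker[OF spine_gen[OF g(1)] z g(3)] g(2) by simp
    then show ?case using Cons.IH[OF g(3)] by (auto intro: peq.peq_trans)
  qed
  obtain \<tau> where \<tau>: "\<And>x. x \<in> obj P \<Longrightarrow> is_path P x (\<tau> x) z \<and> peq P x x (\<tau> x @ \<sigma> x) []"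
    using spine_inv by metis
  have canonical: "peq P a b p (\<tau> a @ \<sigma> b)" if p: "is_path P a p b" for a p b
  proof -
    have ab: "a \<in> obj P" "b \<in> obj P" using is_path_obj[OF p] by auto
    have "is_path P a [] a" using ab by simp
    with p \<tau>[OF ab(1)] have "peq P a b ([] @ [] @ p) ([] @ (\<tau> a @ \<sigma> a) @ p)"
      by (blast intro: peq_whisker peq.peq_sym)
    moreover have "is_path P b [] b" using ab by simp
    with p \<tau>[OF ab(1)] have "peq P a b (\<tau> a @ (\<sigma> a @ p) @ []) (\<tau> a @ \<sigma> b @ [])"
      by (blast intro: peq_whisker absorb)
    ultimately show ?thesis by (auto intro: peq.peq_trans)
  qed
  show ?thesis
    unfolding clique_def
  proof (intro conjI ballI allI impI)
    show "obj P \<noteq> {}" using \<open>z \<in> obj P\<close> by auto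
  next
    fix a b assume "a \<in> obj P" "b \<in> obj P"
    then show "\<exists>p. is_path P a p b" using spine_inv spine_path by (meson is_path_append)
  next
    fix a b p q assume "is_path P a p b" "is_path P a q b"
    then show "peq P a b p q" using canonical by (meson peq.peq_sym peq.peq_trans)
  qed
qed

definition pres_hom ::
  "('o, 'g, 'z) pres_scheme \<Rightarrow> ('o', 'g', 'z') pres_scheme \<Rightarrow> ('o \<Rightarrow> 'o') \<Rightarrow> ('g \<Rightarrow> 'g') \<Rightarrow> bool"
where
  "pres_hom P Q fo fg \<longleftrightarrow>
     (\<forall>a\<in>obj P. fo a \<in> obj Q) \<and>
     (\<forall>g\<in>gen P. fg g \<in> gen Q \<and> src Q (fg g) = fo (src P g) \<and> tgt Q (fg g) = fo (tgt P g)) \<and>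
     (\<forall>(a, b, p, q)\<in>rel P. (fo a, fo b, map fg p, map fg q) \<in> rel Q)"

lemma pres_hom_is_path:
  "pres_hom P Q fo fg \<Longrightarrow> is_path P a p b \<Longrightarrow> is_path Q (fo a) (map fg p) (fo b)"
  by (induction p arbitrary: a) (auto simp: pres_hom_def)

lemma pres_hom_peq:
  assumes "pres_hom P Q fo fg"
  shows "peq P a b p q \<Longrightarrow> peq Q (fo a) (fo b) (map fg p) (map fg q)"
proof (induction rule: peq.induct)
  case (peq_rel c d p q a u v b)
  have "(fo c, fo d, map fg p, map fg q) \<in> rel Q"
    using peq_rel(1) assms by (fastforce simp: pres_hom_def)
  from peq.peq_rel[OF this pres_hom_is_path[OF assms peq_rel(2)] pres_hom_is_path[OF assms peq_rel(3)]]
  show ?case by simp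
next
  case (peq_refl a p b)
  then show ?case by (intro peq.peq_refl pres_hom_is_path[OF assms])
next
  case (peq_sym a b p q)
  show ?case using peq_sym.IH by (rule peq.peq_sym)
next
  case (peq_trans a b p q r)
  show ?case using peq_trans.IH by (rule peq.peq_trans)
qed

lemma coherent_spine_gen:
  assumes hom: "pres_hom P Q fo fg" and "wf_pres P" "clique P" "w \<in> obj P" "g \<in> gen P"
    and coh: "\<And>c p. is_path P w p c \<Longrightarrow> peq Q (fo w) (fo c) (\<sigma> (fo c)) (map fg p)"
  shows "peq Q (fo w) (fo (tgt P g)) (\<sigma> (fo (src P g)) @ [fg g]) (\<sigma> (fo (tgt P g)))"
proof -
  have st: "src P g \<in> obj P" "tgt P g \<in> obj P"
    using \<open>wf_pres P\<close> \<open>g \<in> gen P\<close> by (auto simp: wf_pres_def)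
  obtain p where p: "is_path P w p (src P g)"
    using clique_connected[OF \<open>clique P\<close> \<open>w \<in> obj P\<close> st(1)] by blast
  have pg: "is_path P w (p @ [g]) (tgt P g)" using p \<open>g \<in> gen P\<close> st by (auto simp: is_path_append)
  have "is_path Q (fo w) [] (fo w)" "is_path Q (fo (src P g)) [fg g] (fo (tgt P g))"
    using pres_hom_is_path[OF hom, of w "[]" w] pres_hom_is_path[OF hom, of "src P g" "[g]"]
      \<open>w \<in> obj P\<close> \<open>g \<in> gen P\<close> st by auto
  from peq_whisker[OF coh[OF p] this]
  have "peq Q (fo w) (fo (tgt P g)) (\<sigma> (fo (src P g)) @ [fg g]) (map fg (p @ [g]))" by simp
  then show ?thesis using peq.peq_sym[OF coh[OF pg]] by (rule peq.peq_trans)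
qed

lemma coherent_spine_inv:
  assumes hom: "pres_hom P Q fo fg" and P: "clique P" and "w \<in> obj P" "c \<in> obj P"
    and coh: "\<And>c p. is_path P w p c \<Longrightarrow> peq Q (fo w) (fo c) (\<sigma> (fo c)) (map fg p)"
  shows "\<exists>t. is_path Q (fo c) t (fo w) \<and> peq Q (fo c) (fo c) (t @ \<sigma> (fo c)) []"
proof -
  obtain t where t: "is_path P c t w" using clique_connected[OF P \<open>c \<in> obj P\<close> \<open>w \<in> obj P\<close>] ..
  obtain p where p: "is_path P w p c" using clique_connected[OF P \<open>w \<in> obj P\<close> \<open>c \<in> obj P\<close>] ..
  have t': "is_path Q (fo c) (map fg t) (fo w)" using pres_hom_is_path[OF hom t] .
  have "is_path Q (fo c) [] (fo c)"
    using pres_hom_is_path[OF hom, of c "[]" c] \<open>c \<in> obj P\<close> by simp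
  from peq_whisker[OF coh[OF p] t' this]
  have "peq Q (fo c) (fo c) (map fg t @ \<sigma> (fo c)) (map fg (t @ p))" by simp
  moreover have "is_path P c (t @ p) c" using t p by (auto simp: is_path_append)
  then have "peq P c c (t @ p) []" using clique_peq[OF P] \<open>c \<in> obj P\<close> by simp
  from pres_hom_peq[OF hom this] have "peq Q (fo c) (fo c) (map fg (t @ p)) []" by simp
  ultimately have "peq Q (fo c) (fo c) (map fg t @ \<sigma> (fo c)) []" by (rule peq.peq_trans)
  with t' show ?thesis by blast
qed

locale glue_setting =
  fixes C :: "('a, 'b) pres" and D :: "('c, 'd) pres"
    and OC :: "'a set" and GC :: "'b set" and OD :: "'c set" and GD :: "'d set"
    and \<alpha> :: "'a \<Rightarrow> 'c" and \<beta> :: "'b \<Rightarrow> 'd"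
  assumes wf_C: "wf_pres C" and wf_D: "wf_pres D"
    and clique_C: "clique C" and clique_D: "clique D"
    and OC_sub: "OC \<subseteq> obj C" and OC_ne: "OC \<noteq> {}" and GC_sub: "GC \<subseteq> gen C"
    and GC_ends: "\<forall>g\<in>GC. src C g \<in> OC \<and> tgt C g \<in> OC"
    and OD_sub: "OD \<subseteq> obj D" and OD_ne: "OD \<noteq> {}" and GD_sub: "GD \<subseteq> gen D"
    and GD_ends: "\<forall>g\<in>GD. src D g \<in> OD \<and> tgt D g \<in> OD"
    and bij_\<alpha>: "bij_betw \<alpha> OC OD" and bij_\<beta>: "bij_betw \<beta> GC GD"
    and \<beta>_ends: "\<forall>g\<in>GC. src D (\<beta> g) = \<alpha> (src C g) \<and> tgt D (\<beta> g) = \<alpha> (tgt C g)"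
    and full: "full_generated_subcat D OD GD"
begin

abbreviation "G \<equiv> G_pres C D OC GC \<alpha> \<beta>"
abbreviation "go \<equiv> glue_obj OC \<alpha>"
abbreviation "gg \<equiv> glue_gen GC \<beta>"

lemma G_simps:
  "obj G = Inl ` (obj C - OC) \<union> Inr ` obj D"
  "gen G = Inl ` (gen C - GC) \<union> Inr ` gen D"
  "src G (Inl g) = go (src C g)" "src G (Inr h) = Inr (src D h)"
  "tgt G (Inl g) = go (tgt C g)" "tgt G (Inr h) = Inr (tgt D h)"
  by (simp_all add: G_pres_def)

lemma go_OC: "c \<in> OC \<Longrightarrow> go c = Inr (\<alpha> c)"
  by (simp add: glue_obj_def)

lemma \<alpha>_OC: "c \<in> OC \<Longrightarrow> \<alpha> c \<in> OD"
  using bij_\<alpha> by (auto simp: bij_betw_def)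

lemma pres_hom_C: "pres_hom C G go gg"
proof -
  have "gg g \<in> gen G \<and> src G (gg g) = go (src C g) \<and> tgt G (gg g) = go (tgt C g)"
    if "g \<in> gen C" for g
  proof (cases "g \<in> GC")
    case True
    then have "\<beta> g \<in> gen D" using bij_\<beta> GD_sub by (auto simp: bij_betw_def)
    with True show ?thesis using \<beta>_ends GC_ends by (simp add: G_simps glue_gen_def go_OC)
  qed (use that in \<open>simp add: G_simps glue_gen_def\<close>)
  moreover have "go a \<in> obj G" if "a \<in> obj C" for a
    using that \<alpha>_OC OD_sub by (auto simp: G_simps glue_obj_def)
  ultimately show ?thesis
    unfolding pres_hom_def by (auto simp: G_pres_def intro!: rev_image_eqI)
qed

lemma pres_hom_D: "pres_hom D G Inr Inr"
  unfolding pres_hom_def by (auto simp: G_pres_def intro!: rev_image_eqI)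

lemma obj_G_cases:
  assumes "x \<in> obj G"
  obtains c where "c \<in> obj C" "x = go c" | d where "d \<in> obj D" "x = Inr d"
  using assms by (auto simp: G_simps glue_obj_def)

lemma gen_G_cases:
  assumes "g \<in> gen G"
  obtains h where "h \<in> gen C" "g = gg h" | h where "h \<in> gen D" "g = Inr h"
  using assms by (auto simp: G_simps glue_gen_def)

lemma GD_path_lift:
  assumes "set q \<subseteq> GD" "is_path D (\<alpha> a) q (\<alpha> b)" "a \<in> OC" "b \<in> OC"
  shows "\<exists>r. set r \<subseteq> GC \<and> map \<beta> r = q \<and> is_path C a r b"
  using assms(1,2,3)
proof (induction q arbitrary: a)
  case Nil
  then have "a = b" using bij_\<alpha> \<open>b \<in> OC\<close> by (auto simp: bij_betw_def inj_on_def)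
  then show ?case using Nil OC_sub by auto
next
  case (Cons g q)
  obtain h where h: "h \<in> GC" "\<beta> h = g" using bij_\<beta> Cons.prems(1) by (auto simp: bij_betw_def)
  have "\<alpha> (src C h) = \<alpha> a" using Cons.prems(2) h \<beta>_ends by auto
  then have src: "src C h = a"
    using bij_\<alpha> GC_ends h(1) Cons.prems(3) by (auto simp: bij_betw_def inj_on_def)
  have "is_path D (\<alpha> (tgt C h)) q (\<alpha> b)" using Cons.prems(2) h \<beta>_ends by auto
  then obtain r where "set r \<subseteq> GC" "map \<beta> r = q" "is_path C (tgt C h) r b"
    using Cons.IH Cons.prems(1) h GC_ends by auto
  then show ?case using h src GC_sub OC_sub Cons.prems(3)
    by (intro exI[of _ "h # r"]) auto
qed

lemma C_path_equiv_D_path: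
  assumes "a \<in> OC" "b \<in> OC" "is_path C a p b" "is_path D (\<alpha> a) q (\<alpha> b)"
  shows "peq G (Inr (\<alpha> a)) (Inr (\<alpha> b)) (map gg p) (map Inr q)"
proof -
  obtain q' where q': "set q' \<subseteq> GD" "is_path D (\<alpha> a) q' (\<alpha> b)" "peq D (\<alpha> a) (\<alpha> b) q q'"
    using full assms(1,2,4) \<alpha>_OC unfolding full_generated_subcat_def by blast
  obtain r where r: "set r \<subseteq> GC" "map \<beta> r = q'" "is_path C a r b"
    using GD_path_lift[OF q'(1,2) assms(1,2)] by blast
  have "map gg r = map Inr q'" using r(1,2) by (auto simp: glue_gen_def)
  then have "peq G (Inr (\<alpha> a)) (Inr (\<alpha> b)) (map gg p) (map Inr q')"
    using pres_hom_peq[OF pres_hom_C clique_peq[OF clique_C assms(3) r(3)]] assms(1,2)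
    by (simp add: go_OC)
  moreover have "peq G (Inr (\<alpha> a)) (Inr (\<alpha> b)) (map Inr q) (map Inr q')"
    using pres_hom_peq[OF pres_hom_D q'(3)] .
  ultimately show ?thesis by (metis peq.peq_sym peq.peq_trans)
qed

definition base :: 'a where "base = (SOME a. a \<in> OC)"

lemma base_OC: "base \<in> OC"
  using OC_ne unfolding base_def by (simp add: some_in_eq)

lemma base_C: "base \<in> obj C" and base_D: "\<alpha> base \<in> obj D"
  using base_OC OC_sub OD_sub \<alpha>_OC by auto

definition spine :: "'a + 'c \<Rightarrow> ('b + 'd) list" where
  "spine x = (case x of
     Inl c \<Rightarrow> map gg (SOME p. is_path C base p c)
   | Inr d \<Rightarrow> map Inr (SOME q. is_path D (\<alpha> base) q d))"

lemma spine_D_coherent: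
  assumes "is_path D (\<alpha> base) q d"
  shows "peq G (Inr (\<alpha> base)) (Inr d) (spine (Inr d)) (map Inr q)"
proof -
  have d: "d \<in> obj D" using is_path_obj[OF assms] by simp
  let ?q = "SOME q. is_path D (\<alpha> base) q d"
  have "peq D (\<alpha> base) d ?q q"
    using clique_peq[OF clique_D clique_some_path[OF clique_D base_D d] assms] .
  from pres_hom_peq[OF pres_hom_D this] show ?thesis by (simp add: spine_def)
qed

lemma spine_C_coherent:
  assumes "is_path C base p c"
  shows "peq G (go base) (go c) (spine (go c)) (map gg p)"
proof (cases "c \<in> OC")
  case True
  let ?q = "SOME q. is_path D (\<alpha> base) q (\<alpha> c)"
  have "is_path D (\<alpha> base) ?q (\<alpha> c)"
    using clique_some_path[OF clique_D base_D] True \<alpha>_OC OD_sub by auto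
  from C_path_equiv_D_path[OF base_OC True assms this]
  show ?thesis using True by (simp add: go_OC base_OC spine_def peq.peq_sym)
next
  case False
  have c: "c \<in> obj C" using is_path_obj[OF assms] by simp
  let ?p = "SOME p. is_path C base p c"
  have "peq C base c ?p p"
    using clique_peq[OF clique_C clique_some_path[OF clique_C base_C c] assms] .
  from pres_hom_peq[OF pres_hom_C this] show ?thesis
    using False by (simp add: spine_def glue_obj_def)
qed

lemma spine_is_path: "x \<in> obj G \<Longrightarrow> is_path G (Inr (\<alpha> base)) (spine x) x"
proof (cases x)
  case (Inl c)
  assume "x \<in> obj G"
  with Inl have c: "c \<in> obj C" "c \<notin> OC" by (auto simp: G_simps)
  from pres_hom_is_path[OF pres_hom_C clique_some_path[OF clique_C base_C c(1)]]
  show ?thesis using Inl c(2) by (simp add: spine_def go_OC base_OC glue_obj_def)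
next
  case (Inr d)
  assume "x \<in> obj G"
  with Inr have d: "d \<in> obj D" by (auto simp: G_simps)
  from pres_hom_is_path[OF pres_hom_D clique_some_path[OF clique_D base_D d]]
  show ?thesis using Inr by (simp add: spine_def)
qed

lemma clique_G: "clique G"
proof (rule clique_if_coherent_spine)
  show "Inr (\<alpha> base) \<in> obj G" using base_D by (simp add: G_simps)
next
  fix x assume "x \<in> obj G"
  then show "is_path G (Inr (\<alpha> base)) (spine x) x" by (rule spine_is_path)
  show "\<exists>t. is_path G x t (Inr (\<alpha> base)) \<and> peq G x x (t @ spine x) []"
    using \<open>x \<in> obj G\<close>
  proof (cases rule: obj_G_cases)
    case (1 c)
    from coherent_spine_inv[OF pres_hom_C clique_C base_C 1(1) spine_C_coherent]
    show ?thesis using 1(2) by (simp add: go_OC base_OC)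
  next
    case (2 d)
    from coherent_spine_inv[OF pres_hom_D clique_D base_D 2(1) spine_D_coherent]
    show ?thesis using 2(2) by simp
  qed
next
  fix g assume "g \<in> gen G"
  then show "peq G (Inr (\<alpha> base)) (tgt G g) (spine (src G g) @ [g]) (spine (tgt G g))"
  proof (cases rule: gen_G_cases)
    case (1 h)
    from coherent_spine_gen[OF pres_hom_C wf_C clique_C base_C 1(1) spine_C_coherent]
    show ?thesis using 1 pres_hom_C by (simp add: pres_hom_def go_OC base_OC)
  next
    case (2 h)
    from coherent_spine_gen[OF pres_hom_D wf_D clique_D base_D 2(1) spine_D_coherent]
    show ?thesis using 2 by (simp add: G_simps)
  qed
qed

end

theorem mainTheorem19:
  fixes C :: "('a, 'b) pres" and D :: "('c, 'd) pres"
    and OC :: "'a set" and GC :: "'b set" and OD :: "'c set" and GD :: "'d set"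
    and \<alpha> :: "'a \<Rightarrow> 'c" and \<beta> :: "'b \<Rightarrow> 'd"
  assumes "wf_pres C" and "wf_pres D"
    and "clique C" and "clique D"
    and "OC \<subseteq> obj C" and "OC \<noteq> {}" and "GC \<subseteq> gen C"
    and "\<forall>g\<in>GC. src C g \<in> OC \<and> tgt C g \<in> OC"
    and "OD \<subseteq> obj D" and "OD \<noteq> {}" and "GD \<subseteq> gen D"
    and "\<forall>g\<in>GD. src D g \<in> OD \<and> tgt D g \<in> OD"
    and "bij_betw \<alpha> OC OD" and "bij_betw \<beta> GC GD"
    and "\<forall>g\<in>GC. src D (\<beta> g) = \<alpha> (src C g) \<and> tgt D (\<beta> g) = \<alpha> (tgt C g)"
    and "full_generated_subcat D OD GD"
  shows "clique (G_pres C D OC GC \<alpha> \<beta>)"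
proof -
  interpret glue_setting C D OC GC OD GD \<alpha> \<beta>
    using assms by unfold_locales
  show ?thesis by (rule clique_G)
qed

end
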